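(* Let $p$ be a prime, $m\ge 0$ an integer, $T\ge 0$ and $\lambda>0$ real, and suppose $1\le m+\lceil \log_p\lambda\rceil$. Then $$\Pr\Big(\sup_{0\le s\le T}\frac{\big|p^m S^{(p)}_{\lfloor D_p p^{mb}s\rfloor}\big|_p}{p}<\lambda\Big)=\Big(1-\frac{(p[\lambda]_p)^{-b}}{p^{mb}}\Big)^{\lfloor D_p p^{mb}T\rfloor}.$$
   Context: Fix a real exponent $b>0$. For a prime $p$, $\mathbb{Q}_p$ denotes the $p$-adic numbers with absolute value $|\cdot|_p$ and $\mathbb{Z}_p$ its closed unit ball. Let $G_p\subset\mathbb{Q}_p$ be the set of $p$-adic numbers of the form $\sum_{k<0}a_kp^k$ with $a_k\in\{0,\dots,p-1\}$, only finitely many nonzero; $G_p$ is a set of representatives of $\mathbb{Q}_p/\mathbb{Z}_p$ and is given the group structure of $\mathbb{Q}_p/\mathbb{Z}_p$. Let $X^{(p)}$ be a $G_p$-valued random variable with $\Pr(|X^{(p)}|_p=p^k)=(p^b-1)p^{-kb}$ for every integer $k\ge1$, and, conditionally on $|X^{(p)}|_p=p^k$, uniformly distributed on the finite set $\{x\in G_p:|x|_p=p^k\}$. Let $X^{(p)}_1,X^{(p)}_2,\dots$ be i.i.d. copies of $X^{(p)}$ and $S^{(p)}_n=X^{(p)}_1+\dots+X^{(p)}_n$ (sum in the group $G_p$), $S^{(p)}_0=0$. Given a nonnegative real $\sigma_p$ (the diffusion coefficient at $p$), put $D_p=\frac{p^b(p-1)}{p^{b+1}-1}\sigma_p$. For $\lambda>0$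 write $[\lambda]_p=p^{\lceil\log_p\lambda\rceil-1}$. *)

theory Defs
  imports "HOL-Probability.Probability" "HOL-Computational_Algebra.Computational_Algebra"
begin

definition padic_val :: "nat \<Rightarrow> rat \<Rightarrow> int" where
  "padic_val p x = int (multiplicity (int p) (fst (quotient_of x)))
                 - int (multiplicity (int p) (snd (quotient_of x)))"

definition padic_abs :: "nat \<Rightarrow> rat \<Rightarrow> real" where
  "padic_abs p x = (if x = 0 then 0 else real p powr (- real_of_int (padic_val p x)))"

text \<open>G_p: the p-adic numbers sum_{k<0} a_k p^k with finitely many nonzero digits,
  i.e. the rationals in [0,1) whose denominator is a power of p. The group law of
  Q_p/Z_p is addition modulo 1, i.e. x + y followed by frac.\<close>
definition Gp :: "nat \<Rightarrow> rat set" where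
  "Gp p = {x. 0 \<le> x \<and> x < 1 \<and> (\<exists>k::nat. x * of_nat p ^ k \<in> \<int>)}"

definition Gp_add :: "rat \<Rightarrow> rat \<Rightarrow> rat" where
  "Gp_add x y = frac (x + y)"

definition walk :: "(nat \<Rightarrow> 'w \<Rightarrow> rat) \<Rightarrow> nat \<Rightarrow> 'w \<Rightarrow> rat" where
  "walk X n \<omega> = frac (\<Sum>i<n. X i \<omega>)"

definition diff_coeff :: "nat \<Rightarrow> real \<Rightarrow> real \<Rightarrow> real" where
  "diff_coeff p b \<sigma> = real p powr b * (real p - 1) / (real p powr (b + 1) - 1) * \<sigma>"

definition pfloor :: "nat \<Rightarrow> real \<Rightarrow> real" where
  "pfloor p l = real p powr (real_of_int (\<lceil>log (real p) l\<rceil> - 1))"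

end

theory Submission
  imports Defs
begin

text \<open>For \<open>x \<in> G\<^sub>p\<close> the scaled norm \<open>|p\<^sup>m x|\<^sub>p / p\<close> lies below \<open>\<lambda>\<close> exactly when
  \<open>p\<^sup>k x \<in> \<int>\<close> for \<open>k = m + \<lceil>log\<^sub>p \<lambda>\<rceil>\<close>, i.e. when \<open>x\<close> lies in the subgroup \<open>p\<^sup>-\<^sup>k\<int>/\<int>\<close>.
  Being a subgroup, it contains the walk up to time \<open>N\<close> iff it contains each of the
  first \<open>N\<close> steps, so by independence the probability is the \<open>N\<close>-th power of
  \<open>P(|X|\<^sub>p \<le> p\<^sup>k) = 1 - p\<^sup>-\<^sup>k\<^sup>b\<close>, the complement of a geometric tail.
  The times \<open>\<lfloor>D\<^sub>p p\<^sup>m\<^sup>b s\<rfloor>\<close>, \<open>0 \<le> s \<le> T\<close>, are exactly \<open>0, \<dots>, N = \<lfloor>D\<^sub>p p\<^sup>m\<^sup>b T\<rfloor>\<close>,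
  and \<open>(p[\<lambda>]\<^sub>p)\<^sup>-\<^sup>b / p\<^sup>m\<^sup>b = p\<^sup>-\<^sup>k\<^sup>b\<close>.\<close>

lemma padic_val_of_int_mult_prime_power:
  assumes "prime p" "\<not> int p dvd a"
  shows "padic_val p (of_int (a * int p ^ e)) = int e"
proof -
  have "prime (int p)" using assms(1) by simp
  moreover have "a \<noteq> 0" using assms(2) by auto
  ultimately have "multiplicity (int p) (a * int p ^ e) = e"
    using assms(2) by (simp add: multiplicity_prime_elem_times_other multiplicity_same_power
        prime_imp_prime_elem prime_gt_0_int)
  then show ?thesis unfolding padic_val_def quotient_of_rat_of_int by simp
qed

lemma padic_val_of_int_div_prime_power:
  assumes "prime p" "\<not> int p dvd a"
  shows "padic_val p (of_int a / of_int (int p ^ j)) = - int j"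
proof -
  have pp: "prime (int p)" using assms(1) by simp
  have "coprime (int p) a" using assms(2) pp by (simp add: prime_imp_coprime)
  then have "coprime a (int p ^ j)" by (simp add: coprime_commute)
  moreover have "0 < int p ^ j" using assms(1) by (simp add: prime_gt_0_nat)
  ultimately have "quotient_of (of_int a / of_int (int p ^ j)) = (a, int p ^ j)"
    by (metis Fract_of_int_quotient quotient_of_Fract normalize_stable)
  moreover have "multiplicity (int p) a = 0"
    using assms(2) by (simp add: not_dvd_imp_multiplicity_0)
  moreover have "multiplicity (int p) (int p ^ j) = j"
    using pp by (simp add: multiplicity_same_power prime_gt_0_int)
  ultimately show ?thesis unfolding padic_val_def by simp
qed

lemma padic_abs_prime_power_mult_fraction:
  assumes "prime p" "\<not> int p dvd a"
  shows "padic_abs p (of_nat p ^ m * (of_int a / of_int (int p ^ j))) = real p powr (real j - real m)"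
proof -
  have p0: "int p > 0" using assms(1) by (simp add: prime_gt_0_nat)
  have a0: "a \<noteq> 0" using assms(2) by auto
  show ?thesis
  proof (cases "j \<le> m")
    case True
    then have "(of_nat p :: rat) ^ m = of_nat p ^ j * of_nat p ^ (m - j)"
      by (simp add: power_add[symmetric])
    then have "of_nat p ^ m * (of_int a / of_int (int p ^ j)) = (of_int (a * int p ^ (m - j)) :: rat)"
      using p0 by (simp add: field_simps)
    moreover have "(of_int (a * int p ^ (m - j)) :: rat) \<noteq> 0" using a0 p0 by simp
    ultimately show ?thesis
      using padic_val_of_int_mult_prime_power[OF assms, of "m - j"] True
      by (simp add: padic_abs_def)
  next
    case False
    then have "(of_nat p :: rat) ^ j = of_nat p ^ m * of_nat p ^ (j - m)"
      by (simp add: power_add[symmetric])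
    then have "of_nat p ^ m * (of_int a / of_int (int p ^ j)) = (of_int a / of_int (int p ^ (j - m)) :: rat)"
      using p0 by (simp add: field_simps)
    moreover have "(of_int a / of_int (int p ^ (j - m)) :: rat) \<noteq> 0" using a0 p0 by simp
    ultimately show ?thesis
      using padic_val_of_int_div_prime_power[OF assms, of "j - m"] False
      by (simp add: padic_abs_def)
  qed
qed

lemma fraction_mult_prime_power_in_Ints_iff:
  assumes "prime p" "\<not> int p dvd a"
  shows "of_int a / of_int (int p ^ j) * (of_nat p ^ k :: rat) \<in> \<int> \<longleftrightarrow> j \<le> k"
proof -
  have p0: "int p > 0" using assms(1) by (simp add: prime_gt_0_nat)
  show ?thesis
  proof (cases "j \<le> k")
    case True
    then have "(of_nat p :: rat) ^ k = of_nat p ^ j * of_nat p ^ (k - j)"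
      by (simp add: power_add[symmetric])
    then have "of_int a / of_int (int p ^ j) * (of_nat p ^ k :: rat) = of_int (a * int p ^ (k - j))"
      using p0 by (simp add: field_simps)
    with True show ?thesis by simp
  next
    case False
    then have "(of_nat p :: rat) ^ j = of_nat p ^ k * of_nat p ^ (j - k)"
      by (simp add: power_add[symmetric])
    then have eq: "of_int a / of_int (int p ^ j) * (of_nat p ^ k :: rat) = of_int a / of_int (int p ^ (j - k))"
      using p0 by (simp add: field_simps)
    have "(of_int a / of_int (int p ^ (j - k)) :: rat) \<notin> \<int>"
    proof
      assume "(of_int a / of_int (int p ^ (j - k)) :: rat) \<in> \<int>"
      then obtain z where "(of_int a / of_int (int p ^ (j - k)) :: rat) = of_int z"
        by (metis Ints_cases)
      then have "(of_int a :: rat) = of_int (z * int p ^ (j - k))"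
        using p0 by (simp add: field_simps)
      then have "a = z * int p ^ (j - k)" by (simp only: of_int_eq_iff)
      moreover have "int p dvd int p ^ (j - k)" using False by simp
      ultimately show False using assms(2) by simp
    qed
    with eq False show ?thesis by simp
  qed
qed

lemma Gp_nonzeroE:
  assumes "prime p" "x \<in> Gp p" "x \<noteq> 0"
  obtains a j where "\<not> int p dvd a" "x = of_int a / of_int (int p ^ j)"
proof -
  have pp: "prime (int p)" and p0: "int p > 0"
    using assms(1) by (simp_all add: prime_gt_0_nat)
  obtain k n where x01: "0 \<le> x" "x < 1" and kn: "x * of_nat p ^ k = of_int n"
    using assms(2) unfolding Gp_def by (auto elim: Ints_cases)
  have "(of_int n :: rat) > 0"
    unfolding kn[symmetric] using x01 assms(3) p0 by simp
  then have "n > 0" by simp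
  define t where "t = multiplicity (int p) n"
  define a where "a = n div int p ^ t"
  have na: "n = int p ^ t * a" unfolding a_def t_def by (simp add: multiplicity_dvd)
  have ndvd: "\<not> int p dvd a"
    unfolding a_def t_def using multiplicity_decompose[of n "int p"] \<open>n > 0\<close> pp prime_gt_1_nat[OF assms(1)]
    by (simp add: prime_elem_not_unit prime_imp_prime_elem)
  have "t < k"
  proof (rule ccontr)
    assume "\<not> t < k"
    then have "int p ^ t = int p ^ k * int p ^ (t - k)" by (simp add: power_add[symmetric])
    then have "x = of_int (int p ^ (t - k) * a)" using kn na p0 by (simp add: field_simps)
    moreover have "int p ^ (t - k) * a \<ge> 1"
      using \<open>n > 0\<close> na p0 by (simp add: int_one_le_iff_zero_less zero_less_mult_iff)
    ultimately show False using x01 by linarith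
  qed
  then have "(of_nat p :: rat) ^ k = of_nat p ^ t * of_nat p ^ (k - t)"
    by (simp add: power_add[symmetric])
  then have "x = of_int a / of_int (int p ^ (k - t))" using kn na p0 by (simp add: field_simps)
  with ndvd show ?thesis by (rule that)
qed

lemma Gp_scaled_padic_abs_less_iff:
  assumes "prime p" "x \<in> Gp p" "lam > 0" "int k = int m + \<lceil>log (real p) lam\<rceil>"
  shows "padic_abs p (of_nat p ^ m * x) / real p < lam \<longleftrightarrow> x * of_nat p ^ k \<in> \<int>"
proof (cases "x = 0")
  case True
  then show ?thesis using assms(3) by (simp add: padic_abs_def)
next
  case False
  with assms(1,2) obtain a j where a: "\<not> int p dvd a" and x: "x = of_int a / of_int (int p ^ j)"
    by (rule Gp_nonzeroE)
  have p1: "real p > 1" using prime_gt_1_nat[OF assms(1)] by simp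
  have "padic_abs p (of_nat p ^ m * x) / real p = real p powr (real j - real m - 1)"
    using padic_abs_prime_power_mult_fraction[OF assms(1) a] x p1 by (simp add: powr_diff)
  also have "\<dots> < lam \<longleftrightarrow> real j - real m - 1 < log (real p) lam"
    using powr_less_iff[OF p1 assms(3)] by simp
  also have "\<dots> \<longleftrightarrow> int j - int m - 1 < \<lceil>log (real p) lam\<rceil>"
    by (simp add: less_ceiling_iff)
  also have "\<dots> \<longleftrightarrow> j \<le> k"
    using assms(4) by linarith
  also have "\<dots> \<longleftrightarrow> x * of_nat p ^ k \<in> \<int>"
    using fraction_mult_prime_power_in_Ints_iff[OF assms(1) a] x by simp
  finally show ?thesis .
qed

lemma Gp_mult_prime_power_notin_Ints_iff:
  assumes "prime p" "x \<in> Gp p"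
  shows "x * of_nat p ^ k \<notin> \<int> \<longleftrightarrow> (\<exists>i. padic_abs p x = real p ^ (i + k + 1))"
proof (cases "x = 0")
  case True
  then show ?thesis using prime_gt_0_nat[OF assms(1)] by (simp add: padic_abs_def)
next
  case False
  with assms obtain a j where a: "\<not> int p dvd a" and x: "x = of_int a / of_int (int p ^ j)"
    by (rule Gp_nonzeroE)
  have p1: "real p > 1" using prime_gt_1_nat[OF assms(1)] by simp
  have "padic_abs p x = real p ^ j"
    using padic_abs_prime_power_mult_fraction[OF assms(1) a, of 0 j] x p1 by (simp add: powr_realpow)
  then have "(\<exists>i. padic_abs p x = real p ^ (i + k + 1)) \<longleftrightarrow> (\<exists>i. j = i + k + 1)"
    using power_inject_exp[OF p1] by metis
  also have "\<dots> \<longleftrightarrow> \<not> j \<le> k" by presburger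
  finally show ?thesis using fraction_mult_prime_power_in_Ints_iff[OF assms(1) a] x by simp
qed

lemma frac_mult_in_Ints:
  fixes y q :: rat
  assumes "y * q \<in> \<int>" "q \<in> \<int>"
  shows "frac y * q \<in> \<int>"
proof -
  have "frac y * q = y * q - of_int \<lfloor>y\<rfloor> * q" unfolding frac_def by (rule left_diff_distrib)
  with assms show ?thesis by simp
qed

lemma frac_partial_sums_mult_in_Ints_iff:
  fixes x :: "nat \<Rightarrow> rat"
  assumes "q \<in> \<int>"
  shows "(\<forall>n\<le>N. frac (\<Sum>i<n. x i) * q \<in> \<int>) \<longleftrightarrow> (\<forall>i<N. x i * q \<in> \<int>)"
proof
  assume steps: "\<forall>i<N. x i * q \<in> \<int>"
  show "\<forall>n\<le>N. frac (\<Sum>i<n. x i) * q \<in> \<int>"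
  proof (intro allI impI)
    fix n assume "n \<le> N"
    with steps have "(\<Sum>i<n. x i * q) \<in> \<int>" by (intro Ints_sum) simp
    then show "frac (\<Sum>i<n. x i) * q \<in> \<int>"
      using assms by (intro frac_mult_in_Ints) (simp_all add: sum_distrib_right)
  qed
next
  assume sums: "\<forall>n\<le>N. frac (\<Sum>i<n. x i) * q \<in> \<int>"
  show "\<forall>i<N. x i * q \<in> \<int>"
  proof (intro allI impI)
    fix i assume "i < N"
    define s where "s = (\<Sum>j<i. x j)"
    have "frac (s + x i) * q \<in> \<int>" "frac s * q \<in> \<int>"
      using sums \<open>i < N\<close> unfolding s_def by (auto dest: spec[of _ "Suc i"])
    moreover have "of_int \<lfloor>s + x i\<rfloor> * q \<in> \<int>" "of_int \<lfloor>s\<rfloor> * q \<in> \<int>"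
      using assms by simp_all
    moreover have "x i * q = (frac (s + x i) * q - frac s * q) + (of_int \<lfloor>s + x i\<rfloor> * q - of_int \<lfloor>s\<rfloor> * q)"
      unfolding frac_def by (simp add: algebra_simps)
    ultimately show "x i * q \<in> \<int>" by simp
  qed
qed

lemma sum_Gp_mult_prime_power_in_Ints:
  fixes n :: nat
  assumes "\<And>i. i < n \<Longrightarrow> x i \<in> Gp p"
  shows "\<exists>k. (\<Sum>i<n. x i) * of_nat p ^ k \<in> \<int>"
  using assms
proof (induction n)
  case 0
  then show ?case by simp
next
  case (Suc n)
  then obtain k1 where k1: "(\<Sum>i<n. x i) * of_nat p ^ k1 \<in> \<int>" by auto
  obtain k2 where k2: "x n * of_nat p ^ k2 \<in> \<int>" using Suc.prems by (auto simp: Gp_def)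
  have "(\<Sum>i<Suc n. x i) * of_nat p ^ (k1 + k2) =
        ((\<Sum>i<n. x i) * of_nat p ^ k1) * of_nat p ^ k2 + (x n * of_nat p ^ k2) * of_nat p ^ k1"
    by (simp add: power_add algebra_simps)
  also have "\<dots> \<in> \<int>" using k1 k2 by simp
  finally show ?case by blast
qed

lemma walk_in_Gp:
  assumes "\<And>i. X i \<omega> \<in> Gp p"
  shows "walk X n \<omega> \<in> Gp p"
proof -
  obtain k where "(\<Sum>i<n. X i \<omega>) * of_nat p ^ k \<in> \<int>"
    using sum_Gp_mult_prime_power_in_Ints[of n "\<lambda>i. X i \<omega>"] assms by blast
  then have "frac (\<Sum>i<n. X i \<omega>) * of_nat p ^ k \<in> \<int>" by (rule frac_mult_in_Ints) simp
  then show ?thesis unfolding walk_def Gp_def using frac_lt_1 frac_ge_0 by blast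
qed

lemma measurable_walk:
  assumes "\<And>i. X i \<in> measurable M (count_space UNIV)"
  shows "walk X n \<in> measurable M (count_space UNIV)"
proof -
  have "(\<lambda>\<omega>. \<Sum>i<m. X i \<omega>) \<in> measurable M (count_space (UNIV :: rat set))" for m
  proof (induction m)
    case (Suc m)
    have "(\<lambda>\<omega>. (\<lambda>q \<omega>. q + X m \<omega>) (\<Sum>i<m. X i \<omega>) \<omega>) \<in> measurable M (count_space UNIV)"
      by (rule measurable_compose_countable[OF _ Suc.IH])
        (use measurable_comp[OF assms measurable_count_space] in \<open>simp add: o_def\<close>)
    then show ?case by simp
  qed simp
  then show ?thesis unfolding walk_def by simp
qed

lemma image_nat_floor_mult_atLeastAtMost:
  fixes c T :: real
  assumes "c \<ge> 0" "T \<ge> 0"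
  shows "(\<lambda>s. nat \<lfloor>c * s\<rfloor>) ` {0..T} = {..nat \<lfloor>c * T\<rfloor>}"
proof
  show "(\<lambda>s. nat \<lfloor>c * s\<rfloor>) ` {0..T} \<subseteq> {..nat \<lfloor>c * T\<rfloor>}"
    using assms by (auto intro!: nat_mono floor_mono mult_left_mono)
next
  show "{..nat \<lfloor>c * T\<rfloor>} \<subseteq> (\<lambda>s. nat \<lfloor>c * s\<rfloor>) ` {0..T}"
  proof
    fix n assume n: "n \<in> {..nat \<lfloor>c * T\<rfloor>}"
    show "n \<in> (\<lambda>s. nat \<lfloor>c * s\<rfloor>) ` {0..T}"
    proof (cases "c = 0")
      case True
      with n assms show ?thesis by (intro image_eqI[of _ _ 0]) simp_all
    next
      case False
      with assms have "c > 0" by simp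
      have "0 \<le> \<lfloor>c * T\<rfloor>" using \<open>c > 0\<close> assms(2) by simp
      with n have "int n \<le> \<lfloor>c * T\<rfloor>" by (simp add: le_nat_iff)
      then have "real n \<le> c * T" by (simp add: le_floor_iff)
      with \<open>c > 0\<close> show ?thesis
        by (intro image_eqI[of _ _ "real n / c"]) (simp_all add: field_simps)
    qed
  qed
qed

lemma SUP_nat_floor_mult_less_iff:
  fixes f :: "nat \<Rightarrow> real" and c T :: real
  assumes "c \<ge> 0" "T \<ge> 0"
  shows "(SUP s\<in>{0..T}. f (nat \<lfloor>c * s\<rfloor>)) < lam \<longleftrightarrow> (\<forall>n\<le>nat \<lfloor>c * T\<rfloor>. f n < lam)"
proof -
  have "(SUP s\<in>{0..T}. f (nat \<lfloor>c * s\<rfloor>)) = (SUP n\<in>{..nat \<lfloor>c * T\<rfloor>}. f n)"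
    by (simp only: image_nat_floor_mult_atLeastAtMost[OF assms, symmetric] image_image)
  then show ?thesis by (simp add: cSup_eq_Max) auto
qed

lemma geometric_tail_sums:
  fixes q b :: real
  assumes "q > 1" "b > 0"
  shows "(\<lambda>j. (q powr b - 1) * q powr (- (real (j + k + 1) * b))) sums q powr (- (real k * b))"
proof -
  define r where "r = q powr (- b)"
  have r: "0 < r" "r < 1" unfolding r_def using assms by (auto intro: powr_less_one)
  have rpow: "q powr (- (real n * b)) = r ^ n" for n
    unfolding r_def using assms by (simp add: powr_power)
  have "q powr b * r = 1" unfolding r_def using assms by (simp add: powr_add[symmetric])
  then have "(q powr b - 1) * r ^ (k + 1) * (1 / (1 - r)) = r ^ k"
    using r by (simp add: field_simps)
  then have "(\<lambda>j. (q powr b - 1) * r ^ (k + 1) * r ^ j) sums r ^ k"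
    using r sums_mult[OF geometric_sums, of r "(q powr b - 1) * r ^ (k + 1)"] by simp
  moreover have "(\<lambda>j. (q powr b - 1) * q powr (- (real (j + k + 1) * b))) = (\<lambda>j. (q powr b - 1) * r ^ (k + 1) * r ^ j)"
    by (simp only: rpow) (simp add: power_add mult_ac)
  ultimately show ?thesis by (simp only: rpow)
qed

locale padic_walk = prob_space M
  for M :: "'w measure" and X :: "nat \<Rightarrow> 'w \<Rightarrow> rat" and p :: nat and b :: real +
  assumes prime_p: "prime p" and b_pos: "b > 0"
    and measurable_X [measurable]: "\<And>i. X i \<in> measurable M (count_space UNIV)"
    and indep_X: "indep_vars (\<lambda>_. count_space UNIV) X UNIV"
    and X_in_Gp: "\<And>i. AE \<omega> in M. X i \<omega> \<in> Gp p"
    and norm_distribution: "\<And>i k. k \<ge> 1 \<Longrightarrow>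
         prob {\<omega> \<in> space M. padic_abs p (X i \<omega>) = real p ^ k}
           = (real p powr b - 1) * real p powr (- (real k * b))"
begin

lemma p_gt_1: "real p > 1"
  using prime_gt_1_nat[OF prime_p] by simp

lemmas measurable_walk_X [measurable] = measurable_walk[OF measurable_X]

lemma prob_X_mult_prime_power_in_Ints:
  "prob {\<omega> \<in> space M. X i \<omega> * of_nat p ^ k \<in> \<int>} = 1 - real p powr (- (real k * b))"
proof -
  define A where "A = {\<omega> \<in> space M. X i \<omega> * of_nat p ^ k \<in> \<int>}"
  define C where "C j = {\<omega> \<in> space M. padic_abs p (X i \<omega>) = real p ^ (j + k + 1)}" for j
  have "C j \<in> events" for j unfolding C_def by measurable
  then have C_events: "range C \<subseteq> events" by auto
  have "disjoint_family C"
    unfolding disjoint_family_on_def C_def using power_inject_exp[OF p_gt_1] p_gt_1 by auto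
  with C_events have "(\<lambda>j. prob (C j)) sums prob (\<Union>(range C))"
    by (rule finite_measure_UNION)
  moreover have "(\<lambda>j. prob (C j)) sums real p powr (- (real k * b))"
  proof -
    have "prob (C j) = (real p powr b - 1) * real p powr (- (real (j + k + 1) * b))" for j
      unfolding C_def by (rule norm_distribution) simp
    then show ?thesis using geometric_tail_sums[OF p_gt_1 b_pos] by presburger
  qed
  ultimately have "prob (\<Union>(range C)) = real p powr (- (real k * b))"
    by (rule sums_unique2)
  moreover have "prob (space M - A) = prob (\<Union>(range C))"
  proof (rule measure_eq_AE)
    show "AE \<omega> in M. (\<omega> \<in> space M - A) = (\<omega> \<in> \<Union>(range C))"
      using X_in_Gp[of i] unfolding A_def C_def
      by eventually_elim (auto simp: Gp_mult_prime_power_notin_Ints_iff[OF prime_p])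
  qed (use C_events in \<open>auto simp: A_def\<close>)
  moreover have "prob (space M - A) = 1 - prob A"
    unfolding A_def by (rule prob_compl) measurable
  ultimately show ?thesis unfolding A_def by simp
qed

lemma prob_all_X_mult_prime_power_in_Ints:
  "prob {\<omega> \<in> space M. \<forall>i<N. X i \<omega> * of_nat p ^ k \<in> \<int>} = (1 - real p powr (- (real k * b))) ^ N"
proof (cases "N = 0")
  case True
  then show ?thesis by (simp add: prob_space)
next
  case False
  define A where "A = {x :: rat. x * of_nat p ^ k \<in> \<int>}"
  have "{\<omega> \<in> space M. \<forall>i<N. X i \<omega> * of_nat p ^ k \<in> \<int>} = (\<Inter>i\<in>{..<N}. X i -` A \<inter> space M)"
    using False unfolding A_def by auto
  also have "prob \<dots> = (\<Prod>i\<in>{..<N}. prob (X i -` A \<inter> space M))"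
    using False by (intro indep_varsD[OF indep_X]) auto
  also have "\<dots> = (1 - real p powr (- (real k * b))) ^ N"
    using prob_X_mult_prime_power_in_Ints unfolding A_def vimage_def Int_def
    by (simp add: conj_commute)
  finally show ?thesis .
qed

lemma prob_walk_mult_prime_power_in_Ints:
  "prob {\<omega> \<in> space M. \<forall>n\<le>N. walk X n \<omega> * of_nat p ^ k \<in> \<int>} = (1 - real p powr (- (real k * b))) ^ N"
  using prob_all_X_mult_prime_power_in_Ints
  by (simp add: walk_def frac_partial_sums_mult_in_Ints_iff)

lemma prob_walk_scaled_padic_abs_less:
  assumes "lam > 0" "int k = int m + \<lceil>log (real p) lam\<rceil>"
  shows "prob {\<omega> \<in> space M. \<forall>n\<le>N. padic_abs p (of_nat p ^ m * walk X n \<omega>) / real p < lam}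
       = (1 - real p powr (- (real k * b))) ^ N"
proof -
  have "AE \<omega> in M. \<forall>i. X i \<omega> \<in> Gp p"
    using X_in_Gp by (simp add: AE_all_countable)
  then have "AE \<omega> in M. (\<forall>n\<le>N. padic_abs p (of_nat p ^ m * walk X n \<omega>) / real p < lam)
                     \<longleftrightarrow> (\<forall>n\<le>N. walk X n \<omega> * of_nat p ^ k \<in> \<int>)"
    by eventually_elim (simp add: Gp_scaled_padic_abs_less_iff[OF prime_p _ assms] walk_in_Gp)
  then have "prob {\<omega> \<in> space M. \<forall>n\<le>N. padic_abs p (of_nat p ^ m * walk X n \<omega>) / real p < lam}
           = prob {\<omega> \<in> space M. \<forall>n\<le>N. walk X n \<omega> * of_nat p ^ k \<in> \<int>}"
    by (intro measure_eq_AE) auto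
  then show ?thesis by (simp add: prob_walk_mult_prime_power_in_Ints)
qed

end

lemma diff_coeff_nonneg:
  assumes "p > 1" "b > 0" "\<sigma> \<ge> 0"
  shows "diff_coeff p b \<sigma> \<ge> 0"
proof -
  have "real p powr (b + 1) > 1" using assms by simp
  then show ?thesis unfolding diff_coeff_def using assms by (simp add: divide_nonneg_pos)
qed

lemma mult_pfloor_powr_div_eq:
  assumes "p > 0" "int k = int m + \<lceil>log (real p) lam\<rceil>"
  shows "(real p * pfloor p lam) powr (- b) / real p powr (real m * b) = real p powr (- (real k * b))"
proof -
  have "real p * pfloor p lam = real p powr real_of_int \<lceil>log (real p) lam\<rceil>"
    unfolding pfloor_def using assms(1) by (simp add: powr_diff)
  then have "(real p * pfloor p lam) powr (- b) / real p powr (real m * b)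
      = real p powr (real_of_int \<lceil>log (real p) lam\<rceil> * - b - real m * b)"
    by (simp only: powr_powr powr_diff)
  also have "real_of_int \<lceil>log (real p) lam\<rceil> * - b - real m * b = - (real k * b)"
    using arg_cong[OF assms(2), of real_of_int] by (simp add: algebra_simps)
  finally show ?thesis .
qed

theorem lemma1:
  fixes M :: "'w measure" and X :: "nat \<Rightarrow> 'w \<Rightarrow> rat"
    and p m :: nat and b \<sigma> T lam :: real
  assumes "prob_space M"
    and "b > 0" and "prime p" and "\<sigma> \<ge> 0" and "T \<ge> 0" and "lam > 0"
    and "1 \<le> int m + \<lceil>log (real p) lam\<rceil>"
    and meas: "\<And>i. X i \<in> measurable M (count_space UNIV)"
    and indep: "prob_space.indep_vars M (\<lambda>_. count_space UNIV) X UNIV"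
    and range: "\<And>i. AE \<omega> in M. X i \<omega> \<in> Gp p"
    and norm_dist: "\<And>i k. k \<ge> 1 \<Longrightarrow>
         measure M {\<omega> \<in> space M. padic_abs p (X i \<omega>) = real p ^ k}
           = (real p powr b - 1) * real p powr (- (real k * b))"
    and unif: "\<And>i k x. k \<ge> 1 \<Longrightarrow> x \<in> Gp p \<Longrightarrow> padic_abs p x = real p ^ k \<Longrightarrow>
         measure M {\<omega> \<in> space M. X i \<omega> = x}
           = measure M {\<omega> \<in> space M. padic_abs p (X i \<omega>) = real p ^ k}
             / real (card {y \<in> Gp p. padic_abs p y = real p ^ k})"
  shows "measure M {\<omega> \<in> space M.
            (SUP s\<in>{0..T}. padic_abs p (of_nat p ^ m *
               walk X (nat \<lfloor>diff_coeff p b \<sigma> * real p powr (real m * b) * s\<rfloor>) \<omega>) / real p) < lam}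
         = (1 - (real p * pfloor p lam) powr (- b) / real p powr (real m * b))
             ^ nat \<lfloor>diff_coeff p b \<sigma> * real p powr (real m * b) * T\<rfloor>"
proof -
  interpret padic_walk M X p b
    using assms by (simp add: padic_walk_def padic_walk_axioms_def)
  define k where "k = nat (int m + \<lceil>log (real p) lam\<rceil>)"
  define c where "c = diff_coeff p b \<sigma> * real p powr (real m * b)"
  have k: "int k = int m + \<lceil>log (real p) lam\<rceil>"
    using assms(7) unfolding k_def by simp
  have "c \<ge> 0"
    unfolding c_def using diff_coeff_nonneg p_gt_1 assms(2,4) by simp
  define f where "f \<omega> n = padic_abs p (of_nat p ^ m * walk X n \<omega>) / real p" for \<omega> n
  have "{\<omega> \<in> space M. (SUP s\<in>{0..T}. f \<omega> (nat \<lfloor>c * s\<rfloor>)) < lam}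
      = {\<omega> \<in> space M. \<forall>n\<le>nat \<lfloor>c * T\<rfloor>. f \<omega> n < lam}"
    using SUP_nat_floor_mult_less_iff[OF \<open>c \<ge> 0\<close> assms(5)] by simp
  also have "prob \<dots> = (1 - real p powr (- (real k * b))) ^ nat \<lfloor>c * T\<rfloor>"
    unfolding f_def by (rule prob_walk_scaled_padic_abs_less[OF assms(6) k])
  also have "real p powr (- (real k * b)) = (real p * pfloor p lam) powr (- b) / real p powr (real m * b)"
    using mult_pfloor_powr_div_eq[OF _ k] p_gt_1 by simp
  finally show ?thesis unfolding c_def f_def by (simp only: mult.assoc)
qed

end
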